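(* Let $(E,\mathscr{T},\le)$ be a topological preordered space and let $c_1:E\to c_1E$, $c_2:E\to c_2E$ be preorder compactifications of $E$ with $c_1E$ and $c_2E$ Hausdorff. If $c_1\le c_2$, then the continuous isotone map $C:c_2E\to c_1E$ with $C\circ c_2=c_1$ satisfies $C(c_2E)=c_1E$, $C(c_2(E))=c_1(E)$ and $C(c_2E\setminus c_2(E))=c_1E\setminus c_1(E)$.
   Context: A topological preordered space is a triple $(E,\mathscr{T},\le)$ with $(E,\mathscr{T})$ a topological space and $\le$ a reflexive transitive relation on $E$. A map is isotone if $x\le y\Rightarrow f(x)\le f(y)$. A preorder embedding is a continuous isotone injective map which is a homeomorphism onto its image and whose inverse (on the image, with the induced preorder) is isotone. A preorder compactification of $E$ is a preorder embedding $c:E\to cE$ into a compact topological preordered space $(cE,\mathscr{T}_c,\le_c)$ with $c(E)$ dense in $cE$. For two preorder compactifications, $c_1\le c_2$ means there is a continuous isotone map $C:c_2E\to c_1E$ with $C\circ c_2=c_1$. *)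

theory Defs
  imports "HOL-Analysis.Analysis"
begin

definition preorder_rel_on :: "'a set \<Rightarrow> ('a \<Rightarrow> 'a \<Rightarrow> bool) \<Rightarrow> bool" where
  "preorder_rel_on S le \<longleftrightarrow>
     (\<forall>x\<in>S. le x x) \<and> (\<forall>x\<in>S. \<forall>y\<in>S. \<forall>z\<in>S. le x y \<longrightarrow> le y z \<longrightarrow> le x z)"

definition isotone_on :: "'a set \<Rightarrow> ('a \<Rightarrow> 'a \<Rightarrow> bool) \<Rightarrow> ('b \<Rightarrow> 'b \<Rightarrow> bool) \<Rightarrow> ('a \<Rightarrow> 'b) \<Rightarrow> bool" where
  "isotone_on S le le' f \<longleftrightarrow> (\<forall>x\<in>S. \<forall>y\<in>S. le x y \<longrightarrow> le' (f x) (f y))"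

definition preorder_embedding ::
  "'a topology \<Rightarrow> ('a \<Rightarrow> 'a \<Rightarrow> bool) \<Rightarrow> 'b topology \<Rightarrow> ('b \<Rightarrow> 'b \<Rightarrow> bool) \<Rightarrow> ('a \<Rightarrow> 'b) \<Rightarrow> bool" where
  "preorder_embedding X le Y le' c \<longleftrightarrow>
     continuous_map X Y c \<and> isotone_on (topspace X) le le' c \<and> inj_on c (topspace X) \<and>
     homeomorphic_map X (subtopology Y (c ` topspace X)) c \<and>
     (\<forall>x\<in>topspace X. \<forall>y\<in>topspace X. le' (c x) (c y) \<longrightarrow> le x y)"

definition preorder_compactification ::
  "'a topology \<Rightarrow> ('a \<Rightarrow> 'a \<Rightarrow> bool) \<Rightarrow> 'b topology \<Rightarrow> ('b \<Rightarrow> 'b \<Rightarrow> bool) \<Rightarrow> ('a \<Rightarrow> 'b) \<Rightarrow> bool" where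
  "preorder_compactification X le Y le' c \<longleftrightarrow>
     preorder_rel_on (topspace Y) le' \<and> compact_space Y \<and>
     preorder_embedding X le Y le' c \<and>
     Y closure_of (c ` topspace X) = topspace Y"

end

theory Submission
  imports Defs
begin

text \<open>A continuous map from a compact space into a Hausdorff space has closed image; if that image
  contains a dense set, it is everything. For the remainders: if a point \<open>z\<close> of the remainder of
  \<open>c\<^sub>2E\<close> were mapped to some \<open>c\<^sub>1(x)\<close>, separate \<open>z\<close> from \<open>c\<^sub>2(x)\<close> by disjoint open sets \<open>U\<close> and \<open>V\<close>.
  Since \<open>c\<^sub>1\<close> is an embedding, \<open>c\<^sub>1(c\<^sub>2\<^sup>-\<^sup>1(V))\<close> is the trace on \<open>c\<^sub>1(E)\<close> of an open \<open>W \<ni> c\<^sub>1(x)\<close>, and the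
  neighbourhood \<open>U \<inter> C\<^sup>-\<^sup>1(W)\<close> of \<open>z\<close> meets the dense set \<open>c\<^sub>2(E)\<close> in a point \<open>c\<^sub>2(e)\<close>. Then \<open>c\<^sub>1(e) \<in> W\<close>
  forces \<open>c\<^sub>2(e) \<in> V\<close>, contradicting \<open>U \<inter> V = {}\<close>.\<close>

lemma image_Diff_eq_of_outside:
  assumes "f ` T = T'" "f ` A = A'" "\<And>z. z \<in> T - A \<Longrightarrow> f z \<notin> A'"
  shows "f ` (T - A) = T' - A'"
proof
  show "f ` (T - A) \<subseteq> T' - A'"
    using assms(1,3) by blast
  show "T' - A' \<subseteq> f ` (T - A)"
  proof
    fix w assume w: "w \<in> T' - A'"
    then obtain z where z: "z \<in> T" "w = f z"
      using assms(1) by (metis DiffD1 imageE)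
    have "z \<notin> A"
      using w z assms(2) by (metis DiffD2 imageI)
    then show "w \<in> f ` (T - A)"
      using z by blast
  qed
qed

lemma continuous_map_image_eq_topspace_of_dense:
  assumes "compact_space Y" "Hausdorff_space Z" "continuous_map Y Z f"
    and "Z closure_of S = topspace Z" "S \<subseteq> f ` topspace Y"
  shows "f ` topspace Y = topspace Z"
proof -
  have "compactin Z (f ` topspace Y)"
    using assms(1,3) image_compactin compact_space_def by blast
  then have "closedin Z (f ` topspace Y)"
    using assms(2) compactin_imp_closedin by blast
  then have "topspace Z \<subseteq> f ` topspace Y"
    using closure_of_minimal assms(4,5) by metis
  then show ?thesis
    using assms(3) continuous_map_image_subset_topspace by blast
qed

lemma extension_maps_remainder_outside_embedding:
  assumes "Hausdorff_space Y2" "continuous_map X Y2 c2"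
    and "Y2 closure_of (c2 ` topspace X) = topspace Y2"
    and "embedding_map X Y1 c1" "continuous_map Y2 Y1 C"
    and C_c2: "\<And>x. x \<in> topspace X \<Longrightarrow> C (c2 x) = c1 x"
    and z: "z \<in> topspace Y2" "z \<notin> c2 ` topspace X"
  shows "C z \<notin> c1 ` topspace X"
proof
  assume "C z \<in> c1 ` topspace X"
  then obtain x where x: "x \<in> topspace X" "C z = c1 x" by blast
  have "c2 x \<in> topspace Y2" "z \<noteq> c2 x"
    using assms(2) x z continuous_map_image_subset_topspace by blast+
  then obtain U V where UV: "openin Y2 U" "openin Y2 V" "z \<in> U" "c2 x \<in> V" "disjnt U V"
    using assms(1) z unfolding Hausdorff_space_def by metis
  define P where "P = {e \<in> topspace X. c2 e \<in> V}"
  have "openin X P"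
    unfolding P_def using UV(2) assms(2) openin_continuous_map_preimage by blast
  then have "openin (subtopology Y1 (c1 ` topspace X)) (c1 ` P)"
    using assms(4) homeomorphic_map_openness_eq unfolding embedding_map_def by blast
  then obtain W where W: "openin Y1 W" "c1 ` P = W \<inter> c1 ` topspace X"
    unfolding openin_subtopology by blast
  have "x \<in> P"
    unfolding P_def using x(1) UV(4) by blast
  then have "C z \<in> W"
    using x(2) W(2) by blast
  define N where "N = U \<inter> {y \<in> topspace Y2. C y \<in> W}"
  have "openin Y2 N"
    unfolding N_def using UV(1) openin_continuous_map_preimage[OF assms(5) W(1)] by blast
  moreover have "z \<in> N"
    unfolding N_def using z(1) UV(3) \<open>C z \<in> W\<close> by blast
  moreover have "z \<in> Y2 closure_of (c2 ` topspace X)"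
    using assms(3) z(1) by simp
  ultimately obtain y where "y \<in> c2 ` topspace X" "y \<in> N"
    unfolding in_closure_of by blast
  then obtain e where e: "e \<in> topspace X" "c2 e \<in> N"
    by blast
  then have "c1 e \<in> W"
    using C_c2[OF e(1)] unfolding N_def by simp
  then obtain e' where e': "e' \<in> P" "c1 e' = c1 e"
    using W(2) e(1) by (metis IntI imageE imageI)
  have "inj_on c1 (topspace X)"
    using assms(4) homeomorphic_imp_injective_map unfolding embedding_map_def by blast
  then have "e' = e"
    using e' e(1) unfolding P_def by (auto dest: inj_onD)
  then have "c2 e \<in> V"
    using e'(1) unfolding P_def by blast
  moreover have "c2 e \<in> U"
    using e(2) unfolding N_def by blast
  ultimately show False
    using UV(5) by (meson disjnt_iff)
qed

theorem mainTheorem2: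
  fixes X :: "'a topology" and le :: "'a \<Rightarrow> 'a \<Rightarrow> bool"
    and Y1 :: "'b topology" and le1 :: "'b \<Rightarrow> 'b \<Rightarrow> bool" and c1 :: "'a \<Rightarrow> 'b"
    and Y2 :: "'c topology" and le2 :: "'c \<Rightarrow> 'c \<Rightarrow> bool" and c2 :: "'a \<Rightarrow> 'c"
    and C :: "'c \<Rightarrow> 'b"
  assumes "preorder_rel_on (topspace X) le"
    and "preorder_compactification X le Y1 le1 c1"
    and "preorder_compactification X le Y2 le2 c2"
    and "Hausdorff_space Y1" and "Hausdorff_space Y2"
    and "continuous_map Y2 Y1 C" and "isotone_on (topspace Y2) le2 le1 C"
    and "\<forall>x\<in>topspace X. C (c2 x) = c1 x"
  shows "C ` topspace Y2 = topspace Y1 \<and>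
         C ` (c2 ` topspace X) = c1 ` topspace X \<and>
         C ` (topspace Y2 - c2 ` topspace X) = topspace Y1 - c1 ` topspace X"
proof -
  have emb1: "embedding_map X Y1 c1" and dense1: "Y1 closure_of (c1 ` topspace X) = topspace Y1"
    using assms(2) by (auto simp: preorder_compactification_def preorder_embedding_def embedding_map_def)
  have c2: "continuous_map X Y2 c2" "compact_space Y2"
      and dense2: "Y2 closure_of (c2 ` topspace X) = topspace Y2"
    using assms(3) by (auto simp: preorder_compactification_def preorder_embedding_def)
  have C_c2: "\<And>x. x \<in> topspace X \<Longrightarrow> C (c2 x) = c1 x"
    using assms(8) by blast
  then have embedded_image: "C ` (c2 ` topspace X) = c1 ` topspace X"
    by (simp add: image_image)
  have "c1 ` topspace X \<subseteq> C ` topspace Y2"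
    using embedded_image continuous_map_image_subset_topspace[OF c2(1)] by (metis image_mono)
  then have surj: "C ` topspace Y2 = topspace Y1"
    by (rule continuous_map_image_eq_topspace_of_dense[OF c2(2) assms(4,6) dense1])
  have "C z \<notin> c1 ` topspace X" if "z \<in> topspace Y2 - c2 ` topspace X" for z
    using extension_maps_remainder_outside_embedding[OF assms(5) c2(1) dense2 emb1 assms(6)]
      C_c2 that by blast
  then have remainder_image: "C ` (topspace Y2 - c2 ` topspace X) = topspace Y1 - c1 ` topspace X"
    by (rule image_Diff_eq_of_outside[OF surj embedded_image])
  show ?thesis
    using surj embedded_image remainder_image by (intro conjI)
qed

end
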